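(* Under the setting of Lemma 1 (a finite point set $P=\{p_1<\dots<p_n\}\subset\mathbb{R}$, a finite set $S'$ of intervals with no endpoint in $P$ such that each gap $(p_{i-1},p_i)$, $2\le i\le n$, contains an endpoint of some interval of $S'$; $Q_0$ the set of points of $P$ contained in no interval of $S'$; $Q_1,\dots,Q_k$ the sets of at least two points of $P\setminus Q_0$ sharing the same code with respect to $S'$), for a nonempty $Q_i$ let $I(Q_i)$ denote the closed interval from the smallest to the largest point of $Q_i$. Then for any two distinct nonempty sets $Q_i,Q_j$ ($i,j\in\{0,\dots,k\}$), either $I(Q_i)\cap I(Q_j)=\emptyset$, or one of them, say $I(Q_j)$, lies strictly between two consecutive points of the other set $Q_i$ (consecutive in the order of $Q_i$).
   Context: The code of a point $p$ with respect to a set $S'$ of intervals is $\{s\in S': p\in s\}$. *)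

theory Defs
  imports Complex_Main
begin

text \<open>An interval of the real line is represented by the pair (a, b) of its endpoints,
  a \<le> b. Since no endpoint lies in P, open/closed is irrelevant for membership of
  points of P; we use the closed interval.\<close>

definition in_ival :: "real \<Rightarrow> real \<times> real \<Rightarrow> bool" where
  "in_ival p s \<longleftrightarrow> fst s \<le> p \<and> p \<le> snd s"

definition code :: "(real \<times> real) set \<Rightarrow> real \<Rightarrow> (real \<times> real) set" where
  "code S p = {s \<in> S. in_ival p s}"

definition endpoints :: "(real \<times> real) set \<Rightarrow> real set" where
  "endpoints S = fst ` S \<union> snd ` S"

definition lemma1_setting :: "real set \<Rightarrow> (real \<times> real) set \<Rightarrow> bool" where
  "lemma1_setting P S \<longleftrightarrow>
     finite P \<and> finite S \<and> (\<forall>s\<in>S. fst s \<le> snd s) \<and>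
     endpoints S \<inter> P = {} \<and>
     (\<forall>p\<in>P. \<forall>q\<in>P. p < q \<and> (\<forall>r\<in>P. \<not> (p < r \<and> r < q)) \<longrightarrow>
        (\<exists>e\<in>endpoints S. p < e \<and> e < q))"

definition Q0 :: "real set \<Rightarrow> (real \<times> real) set \<Rightarrow> real set" where
  "Q0 P S = {p \<in> P. code S p = {}}"

definition Qclasses :: "real set \<Rightarrow> (real \<times> real) set \<Rightarrow> real set set" where
  "Qclasses P S = {C. \<exists>p \<in> P - Q0 P S. C = {q \<in> P - Q0 P S. code S q = code S p} \<and> card C \<ge> 2}"

definition Qfamily :: "real set \<Rightarrow> (real \<times> real) set \<Rightarrow> real set set" where
  "Qfamily P S = insert (Q0 P S) (Qclasses P S)"

definition hull_ival :: "real set \<Rightarrow> real set" where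
  "hull_ival Q = {Min Q .. Max Q}"

definition between_consec :: "real set \<Rightarrow> real set \<Rightarrow> bool" where
  "between_consec B A \<longleftrightarrow> (\<exists>a1\<in>A. \<exists>a2\<in>A. a1 < a2 \<and> (\<forall>a\<in>A. \<not> (a1 < a \<and> a < a2)) \<and>
      hull_ival B \<subseteq> {a1<..<a2})"

end

theory Submission
  imports Defs
begin

text \<open>A point of P lies in an interval exactly when it lies between its endpoints, so the
  intervals containing two points of P also contain every point between them. Hence
  every member of the family is a whole class of points with one code, and if two such
  classes A, B have overlapping hulls with min A < min B, then code(A) \<subseteq> code(B), because
  min B lies between two points of A. No point of A can lie in the hull of B, for it would
  give the reverse inclusion and thus A = B. So B sits between the last point of A before
  it and the first point of A after it.\<close>

definition code_class :: "real set \<Rightarrow> (real \<times> real) set \<Rightarrow> (real \<times> real) set \<Rightarrow> real set" where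
  "code_class P S c = {q \<in> P. code S q = c}"

lemma code_between:
  assumes "p \<le> r" "r \<le> q"
  shows "code S p \<inter> code S q \<subseteq> code S r"
  using assms unfolding code_def in_ival_def by auto

lemma Qfamily_code_class:
  assumes "A \<in> Qfamily P S"
  obtains c where "A = code_class P S c"
proof -
  have "\<exists>c. A = code_class P S c"
  proof (cases "A = Q0 P S")
    case True
    then show ?thesis unfolding Q0_def code_class_def by blast
  next
    case False
    with assms obtain p where p: "p \<in> P - Q0 P S"
      and A: "A = {q \<in> P - Q0 P S. code S q = code S p}"
      unfolding Qfamily_def Qclasses_def by blast
    have "code S p \<noteq> {}" using p unfolding Q0_def by auto
    with A have "A = code_class P S (code S p)"
      unfolding Q0_def code_class_def by auto
    then show ?thesis ..
  qed
  with that show ?thesis by blast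
qed

lemma between_consec_if_points_around:
  fixes A B :: "real set"
  assumes "finite A" "l \<in> A" "l < Min B" "r \<in> A" "Max B < r"
    and "finite B" "B \<noteq> {}"
    and outside: "\<forall>a\<in>A. a \<notin> hull_ival B"
  shows "between_consec B A"
proof -
  define x where "x = Max {a \<in> A. a < Min B}"
  define y where "y = Min {a \<in> A. Max B < a}"
  have "x \<in> {a \<in> A. a < Min B}"
    unfolding x_def using assms(1-3) by (intro Max_in) auto
  then have x: "x \<in> A" "x < Min B" "\<And>a. a \<in> A \<Longrightarrow> a < Min B \<Longrightarrow> a \<le> x"
    unfolding x_def using assms(1) by auto
  have "y \<in> {a \<in> A. Max B < a}"
    unfolding y_def using assms(1,4,5) by (intro Min_in) auto
  then have y: "y \<in> A" "Max B < y" "\<And>a. a \<in> A \<Longrightarrow> Max B < a \<Longrightarrow> y \<le> a"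
    unfolding y_def using assms(1) by auto
  have "Min B \<le> Max B"
    using assms(6,7) by simp
  then have "x < y"
    using x(2) y(2) by linarith
  moreover have "\<forall>a\<in>A. \<not> (x < a \<and> a < y)"
    using outside x y unfolding hull_ival_def by force
  moreover have "hull_ival B \<subseteq> {x<..<y}"
    using x(2) y(2) unfolding hull_ival_def by auto
  ultimately show ?thesis
    unfolding between_consec_def using x(1) y(1) by blast
qed

lemma code_class_outside_hull:
  assumes "finite P" "c \<noteq> d" "code_class P S c \<noteq> {}" "code_class P S d \<noteq> {}"
    and "Min (code_class P S c) \<le> Min (code_class P S d)"
    and "Min (code_class P S d) \<le> Max (code_class P S c)"
  shows "\<forall>a \<in> code_class P S c. a \<notin> hull_ival (code_class P S d)"
proof
  let ?A = "code_class P S c" and ?B = "code_class P S d"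
  have fin: "finite ?A" "finite ?B" using assms(1) unfolding code_class_def by auto
  have in_A: "Min ?A \<in> ?A" "Max ?A \<in> ?A" and in_B: "Min ?B \<in> ?B" "Max ?B \<in> ?B"
    using fin assms(3,4) by auto
  have "c \<subseteq> code S (Min ?B)"
    using code_between[OF assms(5,6), of S] in_A unfolding code_class_def by auto
  then have c_le_d: "c \<subseteq> d"
    using in_B unfolding code_class_def by auto
  fix a assume "a \<in> ?A"
  show "a \<notin> hull_ival ?B"
  proof
    assume "a \<in> hull_ival ?B"
    then have "d \<subseteq> code S a"
      using code_between[of "Min ?B" a "Max ?B" S] in_B
      unfolding hull_ival_def code_class_def by auto
    with \<open>a \<in> ?A\<close> c_le_d assms(2) show False unfolding code_class_def by auto
  qed
qed

lemma overlapping_code_classes_between_consec: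
  assumes "finite P" "c \<noteq> d" "code_class P S c \<noteq> {}" "code_class P S d \<noteq> {}"
    and "Min (code_class P S c) < Min (code_class P S d)"
    and "hull_ival (code_class P S c) \<inter> hull_ival (code_class P S d) \<noteq> {}"
  shows "between_consec (code_class P S d) (code_class P S c)"
proof -
  let ?A = "code_class P S c" and ?B = "code_class P S d"
  have fin: "finite ?A" "finite ?B" using assms(1) unfolding code_class_def by auto
  have "Min ?B \<le> Max ?A"
    using assms(6) unfolding hull_ival_def by auto
  then have outside: "\<forall>a \<in> ?A. a \<notin> hull_ival ?B"
    using code_class_outside_hull[OF assms(1-4)] assms(5) by simp
  have "Max ?A \<in> ?A" using fin(1) assms(3) by simp
  with outside \<open>Min ?B \<le> Max ?A\<close> have "Max ?B < Max ?A"
    unfolding hull_ival_def by force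
  then show ?thesis
    using between_consec_if_points_around[OF fin(1) _ assms(5) \<open>Max ?A \<in> ?A\<close> _ fin(2) assms(4) outside]
      fin(1) assms(3) by simp
qed

theorem lemma2:
  fixes P :: "real set" and S :: "(real \<times> real) set" and A B :: "real set"
  assumes "lemma1_setting P S"
    and "A \<in> Qfamily P S" and "B \<in> Qfamily P S"
    and "A \<noteq> B" and "A \<noteq> {}" and "B \<noteq> {}"
  shows "hull_ival A \<inter> hull_ival B = {} \<or> between_consec B A \<or> between_consec A B"
proof -
  have fin: "finite P" using assms(1) unfolding lemma1_setting_def by blast
  obtain c where A: "A = code_class P S c"
    using Qfamily_code_class[OF assms(2)] .
  obtain d where B: "B = code_class P S d"
    using Qfamily_code_class[OF assms(3)] .
  have "c \<noteq> d" using assms(4) unfolding A B by auto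
  have "finite A" "finite B" using A B fin unfolding code_class_def by auto
  then have "Min A \<in> A" "Min B \<in> B" using assms(5,6) by simp_all
  then have "code S (Min A) = c" "code S (Min B) = d"
    unfolding A B code_class_def by simp_all
  then have "Min A \<noteq> Min B" using \<open>c \<noteq> d\<close> by auto
  then consider "Min A < Min B" | "Min B < Min A" by linarith
  then show ?thesis
  proof cases
    case 1
    then have "hull_ival A \<inter> hull_ival B \<noteq> {} \<Longrightarrow> between_consec B A"
      using overlapping_code_classes_between_consec[OF fin \<open>c \<noteq> d\<close>] assms(5,6) unfolding A B by blast
    then show ?thesis by blast
  next
    case 2
    then have "hull_ival B \<inter> hull_ival A \<noteq> {} \<Longrightarrow> between_consec A B"
      using overlapping_code_classes_between_consec[OF fin \<open>c \<noteq> d\<close>[symmetric]] assms(5,6) unfolding A B by blast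
    then show ?thesis by blast
  qed
qed

end
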